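(* Let $A>0$, let $\mathcal{S} = \{x\in\mathbb{R}^N : \|x\|_2 > A\}$, and let $\widetilde f:\mathbb{R}^{N\times N}\to\mathbb{R}$ be a random differentiable function with $\mathbb{E}\|\nabla\widetilde f(X)\|_F^2 \le M_2$ for all $X\in\mathcal{O}(N)$. Then for any $v^{(1)},\dots,v^{(L)}\in\mathcal{S}$, $$\mathbb{E}\Big[\sum_{l=1}^L \big\|\nabla_{v^{(l)}} \widetilde f\big(H(v^{(1)})\cdots H(v^{(L)})\big)\big\|_2^2\Big] \le \frac{24}{A^2}\, N(N+2)\, L\, M_2 .$$
   Context: $\mathcal{O}(N)$ is the set of real $N\times N$ orthogonal matrices; $\|\cdot\|_F$ is the Frobenius norm. For nonzero $v\in\mathbb{R}^N$, $H(v)=I-2vv^\top/\|v\|_2^2$. The notation $\nabla_{v^{(l)}} g(H(v^{(1)})\cdots H(v^{(L)}))$ denotes the gradient with respect to $v^{(l)}$ of the composite function $(v^{(1)},\dots,v^{(L)})\mapsto g(H(v^{(1)})\cdots H(v^{(L)}))$. *)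

theory Defs
  imports "HOL-Analysis.Analysis" "HOL-Probability.Probability"
begin

(* Gradient of a real-valued function on a Euclidean space (w.r.t. the standard
   inner product; on real^'n^'n this is the Frobenius inner product). *)
definition grad :: "('a::euclidean_space \<Rightarrow> real) \<Rightarrow> 'a \<Rightarrow> 'a" where
  "grad g x = (SOME D. GDERIV g x :> D)"

definition householder :: "real^'n \<Rightarrow> real^'n^'n" where
  "householder v = mat 1 - (2 / (norm v)^2) *\<^sub>R (\<chi> i j. v$i * v$j)"

definition householder_prod :: "nat \<Rightarrow> (nat \<Rightarrow> real^'n) \<Rightarrow> real^'n^'n" where
  "householder_prod L vs = foldr (\<lambda>l P. householder (vs l) ** P) [1..<L+1] (mat 1)"

definition partial_grad_householder ::
  "(real^'n^'n \<Rightarrow> real) \<Rightarrow> nat \<Rightarrow> (nat \<Rightarrow> real^'n) \<Rightarrow> nat \<Rightarrow> real^'n" where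
  "partial_grad_householder g L vs l = grad (\<lambda>w. g (householder_prod L (vs(l := w)))) (vs l)"

end

theory Submission
  imports Defs
begin

text \<open>Fix l and write H(v^(1)) \<cdots> H(v^(L)) = P H(v^(l)) Q with P, Q orthogonal. By the chain rule
  the partial gradient is the pull-back of \<nabla>f(X) along w \<mapsto> P H(w) Q, whose derivative is
  P (dH_v h) Q; orthogonal invariance of the Frobenius norm and \<parallel>dH_v h\<parallel> \<le> 8\<parallel>h\<parallel>/\<parallel>v\<parallel> give
  \<parallel>\<nabla>_(v^(l))\<parallel> \<le> 8/A \<parallel>\<nabla>f(X)\<parallel>. Summing over l and integrating, using that X is orthogonal,
  yields the bound 64 L M2 / A^2, which is at most 24 N(N+2) L M2 / A^2.\<close>

text \<open>For a linear functional \<phi>', the vector adjoint \<phi>' 1 is its Riesz representer.\<close>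

lemma gderiv_adjoint:
  fixes phi :: "'a::euclidean_space \<Rightarrow> real"
  assumes "(phi has_derivative phi') (at x)"
  shows "GDERIV phi x :> adjoint phi' 1"
proof -
  have "linear phi'" using assms by (rule has_derivative_linear)
  then have "phi' = (\<lambda>h. inner h (adjoint phi' 1))" by (simp add: adjoint_works)
  then show ?thesis using assms by (simp add: gderiv_def)
qed

lemma has_derivative_grad:
  fixes phi :: "'a::euclidean_space \<Rightarrow> real"
  assumes "phi differentiable (at x)"
  shows "(phi has_derivative (\<lambda>h. inner h (grad phi x))) (at x)"
proof -
  obtain phi' where "(phi has_derivative phi') (at x)"
    using assms by (auto simp: differentiable_def)
  then have "GDERIV phi x :> adjoint phi' 1" by (rule gderiv_adjoint)
  then have "GDERIV phi x :> grad phi x" unfolding grad_def by (rule someI)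
  then show ?thesis by (simp add: gderiv_def)
qed

lemma norm_grad_le:
  fixes phi :: "'a::euclidean_space \<Rightarrow> real"
  assumes deriv: "(phi has_derivative phi') (at x)"
    and bound: "\<And>h. \<bar>phi' h\<bar> \<le> K * norm h" and "0 \<le> K"
  shows "norm (grad phi x) \<le> K"
proof -
  let ?G = "grad phi x"
  have "phi' = (\<lambda>h. inner h ?G)"
    using deriv has_derivative_grad[OF differentiableI[OF deriv]] by (rule has_derivative_unique)
  then have "norm ?G * norm ?G \<le> K * norm ?G"
    using bound[of ?G] by (simp add: power2_norm_eq_inner[symmetric] power2_eq_square)
  then show ?thesis
    using \<open>0 \<le> K\<close> by (cases "?G = 0") (auto simp: mult_le_cancel_right_pos)
qed

lemma norm_grad_compose_le:
  fixes g :: "'b::euclidean_space \<Rightarrow> real" and h :: "'a::euclidean_space \<Rightarrow> 'b"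
  assumes "(h has_derivative h') (at x)" and "g differentiable (at (h x))"
    and "\<And>u. norm (h' u) \<le> C * norm u" and "0 \<le> C"
  shows "norm (grad (\<lambda>y. g (h y)) x) \<le> C * norm (grad g (h x))"
proof (rule norm_grad_le)
  let ?G = "grad g (h x)"
  show "((\<lambda>y. g (h y)) has_derivative (\<lambda>u. inner (h' u) ?G)) (at x)"
    using has_derivative_compose[OF assms(1) has_derivative_grad[OF assms(2)]] .
  show "\<bar>inner (h' u) ?G\<bar> \<le> C * norm ?G * norm u" for u
  proof -
    have "\<bar>inner (h' u) ?G\<bar> \<le> norm (h' u) * norm ?G" by (rule Cauchy_Schwarz_ineq2)
    also have "\<dots> \<le> C * norm u * norm ?G" using assms(3) by (rule mult_right_mono) simp
    finally show ?thesis by (simp add: mult_ac)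
  qed
  show "0 \<le> C * norm ?G" using assms(4) by simp
qed

lemma bilinear_matrix_matrix_mult:
  "bilinear ((**) :: real^'n^'m \<Rightarrow> real^'k^'n \<Rightarrow> real^'k^'m)"
  by (auto simp: bilinear_def linear_iff matrix_matrix_mult_def vec_eq_iff algebra_simps
      sum.distrib sum_distrib_left)

lemma inner_matrix_mult_left:
  fixes P :: "real^'n^'m" and Y :: "real^'k^'n" and Z :: "real^'k^'m"
  shows "inner (P ** Y) Z = inner Y (transpose P ** Z)"
proof -
  have "inner (P ** Y) Z = (\<Sum>i\<in>UNIV. \<Sum>j\<in>UNIV. \<Sum>k\<in>UNIV. P$i$k * Y$k$j * Z$i$j)"
    by (simp add: inner_vec_def matrix_matrix_mult_def sum_distrib_right)
  also have "\<dots> = (\<Sum>i\<in>UNIV. \<Sum>k\<in>UNIV. \<Sum>j\<in>UNIV. P$i$k * Y$k$j * Z$i$j)"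
    by (rule sum.cong[OF refl], rule sum.swap)
  also have "\<dots> = (\<Sum>k\<in>UNIV. \<Sum>i\<in>UNIV. \<Sum>j\<in>UNIV. P$i$k * Y$k$j * Z$i$j)"
    by (rule sum.swap)
  also have "\<dots> = (\<Sum>k\<in>UNIV. \<Sum>j\<in>UNIV. \<Sum>i\<in>UNIV. P$i$k * Y$k$j * Z$i$j)"
    by (rule sum.cong[OF refl], rule sum.swap)
  also have "\<dots> = inner Y (transpose P ** Z)"
    by (simp add: inner_vec_def matrix_matrix_mult_def transpose_def sum_distrib_left mult_ac)
  finally show ?thesis .
qed

lemma inner_matrix_mult_right:
  fixes P :: "real^'k^'n" and Y :: "real^'n^'m" and Z :: "real^'k^'m"
  shows "inner (Y ** P) Z = inner Y (Z ** transpose P)"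
proof -
  have "inner (Y ** P) Z = (\<Sum>i\<in>UNIV. \<Sum>j\<in>UNIV. \<Sum>k\<in>UNIV. Y$i$k * P$k$j * Z$i$j)"
    by (simp add: inner_vec_def matrix_matrix_mult_def sum_distrib_right)
  also have "\<dots> = (\<Sum>i\<in>UNIV. \<Sum>k\<in>UNIV. \<Sum>j\<in>UNIV. Y$i$k * P$k$j * Z$i$j)"
    by (rule sum.cong[OF refl], rule sum.swap)
  also have "\<dots> = inner Y (Z ** transpose P)"
    by (simp add: inner_vec_def matrix_matrix_mult_def transpose_def sum_distrib_left mult_ac)
  finally show ?thesis .
qed

lemma norm_orthogonal_matrix_mult:
  fixes P Q Y :: "real^'n^'n"
  assumes "orthogonal_matrix P" and "orthogonal_matrix Q"
  shows "norm (P ** Y ** Q) = norm Y"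
proof -
  have PP: "transpose P ** P = mat 1" and QQ: "Q ** transpose Q = mat 1"
    using assms unfolding orthogonal_matrix_def by auto
  have "inner (P ** Y ** Q) (P ** Y ** Q) = inner (P ** Y) (P ** Y ** Q ** transpose Q)"
    by (rule inner_matrix_mult_right)
  also have "\<dots> = inner Y (transpose P ** (P ** Y))"
    by (simp add: QQ inner_matrix_mult_left flip: matrix_mul_assoc)
  also have "\<dots> = inner Y Y"
    by (simp add: PP matrix_mul_assoc)
  finally show ?thesis by (simp add: norm_eq_sqrt_inner)
qed

definition outer :: "real^'m \<Rightarrow> real^'n \<Rightarrow> real^'n^'m" where
  "outer a b = (\<chi> i j. a$i * b$j)"

lemma bilinear_outer: "bilinear outer"
  by (auto simp: bilinear_def linear_iff outer_def vec_eq_iff algebra_simps)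

lemma norm_outer: "norm (outer a b) = norm a * norm b"
proof -
  have "inner (outer a b) (outer a b) = inner a a * inner b b"
    by (simp add: outer_def inner_vec_def sum_product algebra_simps) (rule sum.swap)
  then show ?thesis by (simp add: norm_eq_sqrt_inner real_sqrt_mult)
qed

lemma outer_mult_outer: "outer a b ** outer c d = inner b c *\<^sub>R outer a d"
  by (simp add: outer_def matrix_matrix_mult_def vec_eq_iff inner_vec_def sum_distrib_left
      sum_distrib_right mult_ac)

lemma householder_eq_outer: "householder v = mat 1 - (2 / (norm v)^2) *\<^sub>R outer v v"
  by (simp add: householder_def outer_def)

lemma transpose_householder: "transpose (householder v) = householder v"
  by (simp add: householder_def transpose_def vec_eq_iff mat_def mult.commute)

lemma orthogonal_matrix_householder:
  assumes "v \<noteq> 0"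
  shows "orthogonal_matrix (householder v)"
proof -
  let ?c = "2 / (norm v)^2" and ?O = "outer v v"
  have mult: "bilinear ((**) :: real^'a^'a \<Rightarrow> _)" by (rule bilinear_matrix_matrix_mult)
  have "householder v ** householder v
      = mat 1 - ?c *\<^sub>R ?O - ?c *\<^sub>R ?O + (?c * ?c * inner v v) *\<^sub>R ?O"
    by (simp add: householder_eq_outer bilinear_lsub[OF mult] bilinear_rsub[OF mult]
        bilinear_lmul[OF mult] bilinear_rmul[OF mult] outer_mult_outer algebra_simps)
  also have "?c * ?c * inner v v = 2 * ?c"
    using assms by (simp add: power2_norm_eq_inner[symmetric] field_simps power2_eq_square)
  finally have "householder v ** householder v = mat 1"
    by (simp add: algebra_simps flip: scaleR_left_distrib)
  then show ?thesis by (simp add: orthogonal_matrix transpose_householder)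
qed

definition householder_deriv :: "real^'n \<Rightarrow> real^'n \<Rightarrow> real^'n^'n" where
  "householder_deriv v h = (4 * inner v h / (norm v)^4) *\<^sub>R outer v v
                           - (2 / (norm v)^2) *\<^sub>R (outer v h + outer h v)"

lemma has_derivative_householder:
  assumes "v \<noteq> 0"
  shows "(householder has_derivative householder_deriv v) (at v)"
proof -
  have outer: "((\<lambda>w. outer w w) has_derivative (\<lambda>h. outer v h + outer h v)) (at v)"
    using bounded_bilinear.FDERIV[OF bilinear_outer[unfolded bilinear_conv_bounded_bilinear]
        has_derivative_id has_derivative_id] by simp
  have coeff: "((\<lambda>w. 2 / inner w w) has_derivative (\<lambda>h. - (4 * inner v h / (inner v v)^2))) (at v)"
    using assms by (auto intro!: derivative_eq_intros simp: field_simps power2_eq_square inner_commute)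
  have H: "householder = (\<lambda>w. mat 1 - (2 / inner w w) *\<^sub>R outer w w)"
    by (simp add: fun_eq_iff householder_eq_outer power2_norm_eq_inner)
  have D: "householder_deriv v = (\<lambda>h. 0 - ((2 / inner v v) *\<^sub>R (outer v h + outer h v)
                  + (- (4 * inner v h / (inner v v)^2)) *\<^sub>R outer v v))"
    by (simp add: fun_eq_iff householder_deriv_def power2_norm_eq_inner[symmetric] power_mult)
  show ?thesis
    unfolding H D
    by (intro has_derivative_diff has_derivative_const has_derivative_scaleR coeff outer)
qed

lemma norm_householder_deriv_le:
  assumes "v \<noteq> 0"
  shows "norm (householder_deriv v h) \<le> 8 / norm v * norm h"
proof -
  have nv: "norm v > 0" using assms by simp
  have "norm (householder_deriv v h)
      \<le> 4 * \<bar>inner v h\<bar> / (norm v)^4 * norm (outer v v)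
         + 2 / (norm v)^2 * norm (outer v h + outer h v)"
    unfolding householder_deriv_def
    by (rule order.trans[OF norm_triangle_ineq4]) (simp add: abs_mult)
  also have "\<dots> \<le> 4 * \<bar>inner v h\<bar> / (norm v)^4 * norm (outer v v)
         + 2 / (norm v)^2 * (norm (outer v h) + norm (outer h v))"
    by (intro add_left_mono mult_left_mono norm_triangle_ineq) simp
  also have "\<dots> = 4 * \<bar>inner v h\<bar> / (norm v)^2 + 4 * norm h / norm v"
    using nv by (simp add: norm_outer field_simps power2_eq_square power4_eq_xxxx)
  also have "\<dots> \<le> 4 * (norm v * norm h) / (norm v)^2 + 4 * norm h / norm v"
    by (simp add: divide_right_mono Cauchy_Schwarz_ineq2)
  also have "\<dots> = 8 / norm v * norm h"
    using nv by (simp add: field_simps power2_eq_square)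
  finally show ?thesis .
qed

definition householder_prod_list :: "(nat \<Rightarrow> real^'n) \<Rightarrow> nat list \<Rightarrow> real^'n^'n" where
  "householder_prod_list vs ls = foldr (\<lambda>l P. householder (vs l) ** P) ls (mat 1)"

lemma householder_prod_list_Nil [simp]: "householder_prod_list vs [] = mat 1"
  by (simp add: householder_prod_list_def)

lemma householder_prod_list_Cons [simp]:
  "householder_prod_list vs (l # ls) = householder (vs l) ** householder_prod_list vs ls"
  by (simp add: householder_prod_list_def)

lemma householder_prod_list_append:
  "householder_prod_list vs (ls @ ks) = householder_prod_list vs ls ** householder_prod_list vs ks"
  by (induction ls) (simp_all add: matrix_mul_assoc)

lemma householder_prod_list_cong:
  "(\<And>l. l \<in> set ls \<Longrightarrow> vs l = ws l) \<Longrightarrow> householder_prod_list vs ls = householder_prod_list ws ls"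
  by (induction ls) simp_all

lemma orthogonal_matrix_householder_prod_list:
  "(\<And>l. l \<in> set ls \<Longrightarrow> vs l \<noteq> 0) \<Longrightarrow> orthogonal_matrix (householder_prod_list vs ls)"
  by (induction ls) (simp_all add: orthogonal_matrix_id orthogonal_matrix_mul orthogonal_matrix_householder)

lemma householder_prod_eq_list: "householder_prod L vs = householder_prod_list vs [1..<L+1]"
  by (simp add: householder_prod_def householder_prod_list_def)

lemma householder_prod_fun_upd:
  assumes "l \<in> {1..L}"
  shows "householder_prod L (vs(l := w))
    = householder_prod_list vs [1..<l] ** householder w ** householder_prod_list vs [Suc l..<L+1]"
proof -
  have "[1..<L+1] = [1..<l] @ l # [Suc l..<L+1]"
    using assms upt_add_eq_append[of 1 l "L + 1 - l"] by (simp add: upt_conv_Cons)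
  moreover have "householder_prod_list (vs(l := w)) ls = householder_prod_list vs ls"
    if "l \<notin> set ls" for ls
    using that by (intro householder_prod_list_cong) auto
  ultimately show ?thesis
    by (simp add: householder_prod_eq_list householder_prod_list_append matrix_mul_assoc)
qed

lemma norm_partial_grad_householder_le:
  fixes g :: "real^'n^'n \<Rightarrow> real"
  assumes "g differentiable (at (householder_prod L vs))"
    and "l \<in> {1..L}" and "\<And>k. k \<in> {1..L} \<Longrightarrow> vs k \<noteq> 0"
  shows "norm (partial_grad_householder g L vs l)
    \<le> 8 / norm (vs l) * norm (grad g (householder_prod L vs))"
proof -
  define P where "P = householder_prod_list vs [1..<l]"
  define Q where "Q = householder_prod_list vs [Suc l..<L+1]"
  have orth: "orthogonal_matrix P" "orthogonal_matrix Q"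
    unfolding P_def Q_def using assms(2,3)
    by (auto intro!: orthogonal_matrix_householder_prod_list simp: orthogonal_matrix_id)
  have "vs l \<noteq> 0" using assms(2,3) by blast
  have mult: "bilinear ((**) :: real^'n^'n \<Rightarrow> _)" by (rule bilinear_matrix_matrix_mult)
  have "linear (\<lambda>Y. P ** Y ** Q)"
    using mult unfolding bilinear_def by (auto intro: linear_compose[unfolded o_def])
  then have sandwich: "bounded_linear (\<lambda>Y. P ** Y ** Q)"
    by (simp add: linear_conv_bounded_linear)
  have upd: "householder_prod L (vs(l := w)) = P ** householder w ** Q" for w
    unfolding P_def Q_def by (rule householder_prod_fun_upd[OF assms(2)])
  have "norm (grad (\<lambda>w. g (P ** householder w ** Q)) (vs l))
      \<le> 8 / norm (vs l) * norm (grad g (P ** householder (vs l) ** Q))"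
  proof (rule norm_grad_compose_le)
    show "((\<lambda>w. P ** householder w ** Q) has_derivative
        (\<lambda>h. P ** householder_deriv (vs l) h ** Q)) (at (vs l))"
      using bounded_linear.has_derivative[OF sandwich has_derivative_householder[OF \<open>vs l \<noteq> 0\<close>]] .
    show "norm (P ** householder_deriv (vs l) h ** Q) \<le> 8 / norm (vs l) * norm h" for h
      using norm_householder_deriv_le[OF \<open>vs l \<noteq> 0\<close>] by (simp add: norm_orthogonal_matrix_mult[OF orth])
  qed (use assms(1) upd[of "vs l"] in simp_all)
  then show ?thesis
    unfolding partial_grad_householder_def upd using upd[of "vs l"] by simp
qed

text \<open>Unlike nn_integral_cmult, no measurability of g is required: the gradient of the random
  function need not be measurable in \<omega>.\<close>

lemma nn_integral_cmult_le:
  fixes c :: ennreal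
  assumes "c \<noteq> top"
  shows "(\<integral>\<^sup>+x. c * g x \<partial>M) \<le> c * integral\<^sup>N M g"
proof (cases "c = 0")
  case False
  have cancel: "c * (y / c) = y" for y :: ennreal
    using mult_divide_eq_ennreal[OF False assms, of y] by (simp add: ennreal_times_divide mult.commute)
  show ?thesis
    unfolding nn_integral_def[of M "\<lambda>x. c * g x"]
  proof (rule SUP_least)
    fix s assume "s \<in> {s. simple_function M s \<and> s \<le> (\<lambda>x. c * g x)}"
    then have s: "simple_function M s" and "\<And>x. s x \<le> c * g x" by (auto simp: le_fun_def)
    then have "(\<lambda>x. s x / c) \<le> g"
      using ennreal_mult_le_mult_iff[OF False assms] by (metis cancel le_funI)
    moreover have s': "simple_function M (\<lambda>x. s x / c)"
      using s by (rule simple_function_compose1)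
    ultimately have "integral\<^sup>S M (\<lambda>x. s x / c) \<le> integral\<^sup>N M g"
      unfolding nn_integral_def by (intro SUP_upper) auto
    moreover have "integral\<^sup>S M s = c * integral\<^sup>S M (\<lambda>x. s x / c)"
      using simple_integral_mult[OF s', of c] by (simp add: cancel)
    ultimately show "integral\<^sup>S M s \<le> c * integral\<^sup>N M g"
      by (simp add: mult_left_mono)
  qed
qed simp

lemma sum_norm_partial_grad_householder_le:
  fixes g :: "real^'n^'n \<Rightarrow> real"
  assumes "g differentiable (at (householder_prod L vs))"
    and "A > 0" and "\<And>l. l \<in> {1..L} \<Longrightarrow> A < norm (vs l)"
  shows "(\<Sum>l=1..L. (norm (partial_grad_householder g L vs l))^2)
    \<le> 64 / A^2 * real L * (norm (grad g (householder_prod L vs)))^2"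
proof -
  let ?G = "norm (grad g (householder_prod L vs))"
  have nonzero: "\<And>l. l \<in> {1..L} \<Longrightarrow> vs l \<noteq> 0"
    using assms(2,3) by force
  have "(norm (partial_grad_householder g L vs l))^2 \<le> 64 / A^2 * ?G^2"
    if l: "l \<in> {1..L}" for l
  proof -
    have "norm (partial_grad_householder g L vs l) \<le> 8 / norm (vs l) * ?G"
      by (rule norm_partial_grad_householder_le[OF assms(1) l nonzero])
    also have "\<dots> \<le> 8 / A * ?G"
      using assms(2) assms(3)[OF l] by (intro mult_right_mono frac_le) auto
    finally have "(norm (partial_grad_householder g L vs l))^2 \<le> (8 / A * ?G)^2"
      by (rule power_mono) simp
    then show ?thesis by (simp add: power_mult_distrib power_divide)
  qed
  then have "(\<Sum>l=1..L. (norm (partial_grad_householder g L vs l))^2)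
      \<le> (\<Sum>l=1..L. 64 / A^2 * ?G^2)"
    by (rule sum_mono)
  also have "\<dots> = 64 / A^2 * real L * ?G^2"
    by simp
  finally show ?thesis .
qed

lemma nn_integral_sum_norm_partial_grad_householder_le:
  fixes f :: "'w \<Rightarrow> real^'n^'n \<Rightarrow> real"
  assumes "A > 0" and "\<And>\<omega>. \<omega> \<in> space M \<Longrightarrow> f \<omega> differentiable (at (householder_prod L v))"
    and "\<And>l. l \<in> {1..L} \<Longrightarrow> A < norm (v l)"
  shows "(\<integral>\<^sup>+ \<omega>. ennreal (\<Sum>l=1..L. (norm (partial_grad_householder (f \<omega>) L v l))^2) \<partial>M)
    \<le> ennreal (64 / A^2 * real L)
       * (\<integral>\<^sup>+ \<omega>. ennreal ((norm (grad (f \<omega>) (householder_prod L v)))^2) \<partial>M)"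
proof -
  let ?c = "64 / A^2 * real L"
  have "(\<integral>\<^sup>+ \<omega>. ennreal (\<Sum>l=1..L. (norm (partial_grad_householder (f \<omega>) L v l))^2) \<partial>M)
      \<le> (\<integral>\<^sup>+ \<omega>. ennreal ?c * ennreal ((norm (grad (f \<omega>) (householder_prod L v)))^2) \<partial>M)"
  proof (rule nn_integral_mono)
    fix \<omega> assume "\<omega> \<in> space M"
    then have "(\<Sum>l=1..L. (norm (partial_grad_householder (f \<omega>) L v l))^2)
        \<le> ?c * (norm (grad (f \<omega>) (householder_prod L v)))^2"
      using assms by (intro sum_norm_partial_grad_householder_le)
    then show "ennreal (\<Sum>l=1..L. (norm (partial_grad_householder (f \<omega>) L v l))^2)
        \<le> ennreal ?c * ennreal ((norm (grad (f \<omega>) (householder_prod L v)))^2)"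
      by (simp add: ennreal_leI flip: ennreal_mult)
  qed
  also have "\<dots> \<le> ennreal ?c * (\<integral>\<^sup>+ \<omega>. ennreal ((norm (grad (f \<omega>) (householder_prod L v)))^2) \<partial>M)"
    by (rule nn_integral_cmult_le) simp
  finally show ?thesis .
qed

theorem mainTheorem8:
  fixes M :: "'w measure"
    and f :: "'w \<Rightarrow> real^'n^'n \<Rightarrow> real"
    and A M2 :: real and L :: nat
    and v :: "nat \<Rightarrow> real^'n"
  assumes "prob_space M"
    and "A > 0"
    and "\<And>X. (\<lambda>\<omega>. f \<omega> X) \<in> borel_measurable M"
    and "\<And>\<omega> X. \<omega> \<in> space M \<Longrightarrow> f \<omega> differentiable (at X)"
    and "\<And>X. orthogonal_matrix X \<Longrightarrow>
           (\<integral>\<^sup>+ \<omega>. ennreal ((norm (grad (f \<omega>) X))^2) \<partial>M) \<le> ennreal M2"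
    and "\<And>l. l \<in> {1..L} \<Longrightarrow> norm (v l) > A"
  shows "(\<integral>\<^sup>+ \<omega>. ennreal (\<Sum>l=1..L. (norm (partial_grad_householder (f \<omega>) L v l))^2) \<partial>M)
         \<le> ennreal (24 / A^2 * real (CARD('n)) * (real (CARD('n)) + 2) * real L * M2)"
proof -
  let ?X = "householder_prod L v" and ?N = "real CARD('n)"
  have "orthogonal_matrix ?X"
    unfolding householder_prod_eq_list using assms(2,6)
    by (force intro!: orthogonal_matrix_householder_prod_list)
  have "1 * 3 \<le> ?N * (?N + 2)"
    by (rule mult_mono) (simp_all add: Suc_le_eq)
  then have "64 / A^2 \<le> 24 / A^2 * ?N * (?N + 2)"
    using divide_right_mono[of 64 "24 * ?N * (?N + 2)" "A^2"] by simp
  then have const_le: "64 / A^2 * real L \<le> 24 / A^2 * ?N * (?N + 2) * real L"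
    by (rule mult_right_mono) simp
  have "(\<integral>\<^sup>+ \<omega>. ennreal (\<Sum>l=1..L. (norm (partial_grad_householder (f \<omega>) L v l))^2) \<partial>M)
      \<le> ennreal (64 / A^2 * real L) * (\<integral>\<^sup>+ \<omega>. ennreal ((norm (grad (f \<omega>) ?X))^2) \<partial>M)"
    using assms(2,4,6) by (rule nn_integral_sum_norm_partial_grad_householder_le)
  also have "\<dots> \<le> ennreal (64 / A^2 * real L) * ennreal M2"
    using assms(5)[OF \<open>orthogonal_matrix ?X\<close>] by (rule mult_left_mono) simp
  also have "\<dots> \<le> ennreal (24 / A^2 * ?N * (?N + 2) * real L) * ennreal M2"
    by (rule mult_right_mono[OF ennreal_leI[OF const_le]]) simp
  also have "\<dots> = ennreal (24 / A^2 * ?N * (?N + 2) * real L * M2)"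
    by (rule ennreal_mult'[symmetric]) simp
  finally show ?thesis .
qed

end
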